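(* Let $t=t(n)=o(n)$ with $t\to\infty$, fix $N\in\mathbb N$ and $k_1,\dots,k_N\in\mathbb N$, and let $F=F(n,t)$ be uniform on $\mathcal F(n,t)$. For $i\in[t]$ let $F_i$ be the tree component of $F$ containing vertex $i$. Then $$\Pr\big[\forall i\in[N]: |V(F_i)|=k_i\big]=(1+o(1))\prod_{i=1}^N \frac{e^{-k_i}k_i^{k_i-1}}{k_i!}.$$
   Context: $\mathcal F(n,t)$ is the class of forests on vertex set $[n]$ with exactly $t$ tree components such that the vertices $1,\dots,t$ lie in distinct components. *)

theory Defs
  imports Complex_Main "HOL-Library.Landau_Symbols"
begin

definition graph_edges :: "nat \<Rightarrow> nat set set" where
  "graph_edges n = {e. e \<subseteq> {1..n} \<and> card e = 2}"

definition has_cycle :: "nat set set \<Rightarrow> bool" where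
  "has_cycle E \<longleftrightarrow> (\<exists>vs. 3 \<le> length vs \<and> distinct vs \<and>
      (\<forall>i < length vs. {vs ! i, vs ! ((i + 1) mod length vs)} \<in> E))"

definition reach :: "nat set set \<Rightarrow> nat \<Rightarrow> nat \<Rightarrow> bool" where
  "reach E u v \<longleftrightarrow> (u, v) \<in> {(x, y). {x, y} \<in> E}\<^sup>*"

definition component :: "nat \<Rightarrow> nat set set \<Rightarrow> nat \<Rightarrow> nat set" where
  "component n E v = {u \<in> {1..n}. reach E v u}"

definition is_forest :: "nat \<Rightarrow> nat set set \<Rightarrow> bool" where
  "is_forest n E \<longleftrightarrow> E \<subseteq> graph_edges n \<and> \<not> has_cycle E"

definition num_components :: "nat \<Rightarrow> nat set set \<Rightarrow> nat" where
  "num_components n E = card (component n E ` {1..n})"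

definition forest_class :: "nat \<Rightarrow> nat \<Rightarrow> nat set set set" where
  "forest_class n t = {E. is_forest n E \<and> num_components n E = t \<and>
      (\<forall>i\<in>{1..t}. \<forall>j\<in>{1..t}. i \<noteq> j \<longrightarrow> \<not> reach E i j)}"

definition comp_size_prob :: "nat \<Rightarrow> nat \<Rightarrow> nat \<Rightarrow> (nat \<Rightarrow> nat) \<Rightarrow> real" where
  "comp_size_prob n t N k =
     real (card {E \<in> forest_class n t. \<forall>i\<in>{1..N}. card (component n E i) = k i})
     / real (card (forest_class n t))"

end

theory Submission
  imports Defs "HOL-Library.Transitive_Closure_Table"
begin

text \<open>A forest in \<open>\<F>(n,t)\<close> is the same as a spanning forest of \<open>[n]\<close> in which every component
  contains exactly one of the roots \<open>1, \<dots>, t\<close>. Deleting a root \<open>v\<close> and promoting its neighbours to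
  roots gives a recursion whose solution is the generalised Cayley formula: there are \<open>r m^(m-r-1)\<close>
  such forests on \<open>m\<close> vertices with \<open>r\<close> prescribed roots. Cutting off the component of root \<open>N\<close>
  (the root, \<open>k\<^sub>N - 1\<close> of the \<open>m - r\<close> non-roots and one of \<open>k\<^sub>N^(k\<^sub>N-2)\<close> spanning trees on them)
  leaves a rooted forest on \<open>m - k\<^sub>N\<close> vertices with \<open>r - 1\<close> roots, so the probability is a product
  of \<open>N\<close> ratios \<open>C(m-r, K-1) K^(K-2) (r-1) (m-K)^(m-K-r) / (r m^(m-r-1))\<close> with \<open>K = k\<^sub>i\<close>. When \<open>r \<rightarrow> \<infinity>\<close> and
  \<open>r/m \<rightarrow> 0\<close>, each ratio tends to \<open>e^(-K) K^(K-1) / K!\<close>, since \<open>C(m-r, K-1) \<sim> m^(K-1) / (K-1)!\<close> and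
  \<open>(1 - K/m)^(m-K-r) \<rightarrow> e^(-K)\<close>.\<close>

subsection \<open>Edge sets and reachability\<close>

definition edges_on :: "'a set \<Rightarrow> 'a set set" where
  "edges_on V = {e. e \<subseteq> V \<and> card e = 2}"

lemma graph_edges_eq_edges_on: "graph_edges n = edges_on {1..n}"
  by (simp add: graph_edges_def edges_on_def)

lemma edges_on_mono: "V \<subseteq> W \<Longrightarrow> edges_on V \<subseteq> edges_on W"
  by (auto simp: edges_on_def)

lemma finite_edges_on: "finite V \<Longrightarrow> finite (edges_on V)"
  unfolding edges_on_def by (rule finite_subset[of _ "Pow V"]) auto

lemma edges_on_doubleton_iff: "{x, y} \<in> edges_on V \<longleftrightarrow> x \<noteq> y \<and> x \<in> V \<and> y \<in> V"
  by (auto simp: edges_on_def card_insert_if)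

lemma edges_onE:
  assumes "e \<in> edges_on V"
  obtains x y where "e = {x, y}" "x \<noteq> y" "x \<in> V" "y \<in> V"
  using assms by (auto simp: edges_on_def card_2_iff)

lemma reach_refl [simp]: "reach E u u"
  by (simp add: reach_def)

lemma reach_edge: "{u, v} \<in> E \<Longrightarrow> reach E u v"
  by (auto simp: reach_def)

lemma reach_trans: "reach E u v \<Longrightarrow> reach E v w \<Longrightarrow> reach E u w"
  unfolding reach_def by (rule rtrancl_trans)

lemma reach_sym: "reach E u v \<Longrightarrow> reach E v u"
proof -
  have "{(x, y). {x, y} \<in> E}\<inverse> = {(x, y). {x, y} \<in> E}"
    by (auto simp: insert_commute)
  then show "reach E u v \<Longrightarrow> reach E v u"
    unfolding reach_def by (metis rtrancl_converseI)
qed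

lemma reach_mono: "E \<subseteq> E' \<Longrightarrow> reach E u v \<Longrightarrow> reach E' u v"
  unfolding reach_def by (erule rtrancl_mono[THEN subsetD, rotated]) auto

lemma reach_induct [consumes 1, case_names refl step]:
  assumes "reach E u w" "P u"
    and "\<And>w w'. reach E u w \<Longrightarrow> {w, w'} \<in> E \<Longrightarrow> P w \<Longrightarrow> P w'"
  shows "P w"
  using assms(1) unfolding reach_def
proof (induction rule: rtrancl_induct)
  case base
  then show ?case using assms(2) by simp
next
  case (step y z)
  then show ?case using assms(3)[of y z] by (auto simp: reach_def)
qed

lemma reach_iff_rtrancl_path:
  "reach E u w \<longleftrightarrow> (\<exists>xs. rtrancl_path (\<lambda>a b. {a, b} \<in> E) u xs w)"
  by (simp add: reach_def rtranclp_eq_rtrancl_path[symmetric] rtranclp_rtrancl_eq)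

lemma reach_isolated:
  assumes "\<forall>e\<in>E. w \<notin> e" "reach E u w"
  shows "u = w"
proof -
  have "u = w \<or> (\<exists>e\<in>E. w \<in> e)"
    using assms(2) by (induction rule: reach_induct) auto
  then show ?thesis using assms(1) by blast
qed

lemma reach_in_vertices:
  assumes "E \<subseteq> edges_on V" "reach E u w" "u \<noteq> w"
  shows "u \<in> V" "w \<in> V"
proof -
  have end_in_V: "u = w \<or> w \<in> V" if "reach E u w" for u w
    using that by (induction rule: reach_induct) (use assms(1) in \<open>auto simp: edges_on_def\<close>)
  show "w \<in> V" using end_in_V assms(2,3) by blast
  show "u \<in> V" using end_in_V reach_sym assms(2,3) by metis
qed

lemma reach_Un_disjoint:
  assumes "A \<subseteq> edges_on S" "B \<subseteq> edges_on T" "S \<inter> T = {}"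
  shows "reach (A \<union> B) u w \<longleftrightarrow> reach A u w \<or> reach B u w"
proof
  assume "reach (A \<union> B) u w"
  then show "reach A u w \<or> reach B u w"
  proof (induction rule: reach_induct)
    case refl
    then show ?case by simp
  next
    case (step w w')
    have "w \<in> S" if "{w, w'} \<in> A" using that assms(1) by (auto simp: edges_on_def)
    moreover have "w \<in> T" if "{w, w'} \<in> B" using that assms(2) by (auto simp: edges_on_def)
    moreover have "w \<in> S" if "reach A u w" "u \<noteq> w" using reach_in_vertices[OF assms(1)] that
      by blast
    moreover have "w \<in> T" if "reach B u w" "u \<noteq> w" using reach_in_vertices[OF assms(2)] that
      by blast
    ultimately show ?case
      using step assms(3) reach_trans[OF _ reach_edge, of _ u w w']
      by (cases "u = w") (auto intro: reach_edge)
  qed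
qed (auto intro: reach_mono)

subsection \<open>Cycles and bridges\<close>

definition all_bridges :: "nat set set \<Rightarrow> bool" where
  "all_bridges E \<longleftrightarrow> (\<forall>x y. {x, y} \<in> E \<longrightarrow> x \<noteq> y \<longrightarrow> \<not> reach (E - {{x, y}}) x y)"

lemma rtrancl_path_last: "rtrancl_path r x xs y \<Longrightarrow> last (x # xs) = y"
  by (induction rule: rtrancl_path.induct) auto

lemma rtrancl_path_nth:
  "rtrancl_path r x xs y \<Longrightarrow> i < length xs \<Longrightarrow> r ((x # xs) ! i) (xs ! i)"
proof (induction arbitrary: i rule: rtrancl_path.induct)
  case (step x y ys z)
  then show ?case by (cases i) auto
qed simp

lemma has_cycle_if_non_bridge:
  assumes "{x, y} \<in> E" "x \<noteq> y" "reach (E - {{x, y}}) x y"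
  shows "has_cycle E"
proof -
  obtain xs where path: "rtrancl_path (\<lambda>a b. {a, b} \<in> E - {{x, y}}) x xs y"
    and dist: "distinct (x # xs)"
    using assms(3) rtrancl_path_distinct unfolding reach_iff_rtrancl_path by metis
  have last: "last (x # xs) = y" by (rule rtrancl_path_last[OF path])
  have edge: "{(x # xs) ! i, xs ! i} \<in> E - {{x, y}}" if "i < length xs" for i
    using rtrancl_path_nth[OF path that] .
  have "xs \<noteq> []" using last assms(2) by auto
  moreover have "xs \<noteq> [y]" using edge[of 0] by force
  ultimately have len: "3 \<le> length (x # xs)"
    using last by (cases xs rule: rev_cases) (auto simp: Suc_le_eq)
  have "{(x # xs) ! i, (x # xs) ! ((i + 1) mod length (x # xs))} \<in> E"
    if "i < length (x # xs)" for i
  proof (cases "i < length xs")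
    case True
    then show ?thesis using edge[of i] by simp
  next
    case False
    then have "i = length xs" using that by simp
    moreover have "(x # xs) ! length xs = y" using last last_conv_nth[of "x # xs"] by simp
    ultimately show ?thesis using assms(1) by (simp add: insert_commute)
  qed
  then show ?thesis unfolding has_cycle_def using len dist by blast
qed

lemma non_bridge_if_has_cycle:
  assumes "has_cycle E"
  obtains x y where "{x, y} \<in> E" "x \<noteq> y" "reach (E - {{x, y}}) x y"
proof -
  obtain vs where len: "3 \<le> length vs" and dist: "distinct vs"
    and cyc: "\<And>i. i < length vs \<Longrightarrow> {vs ! i, vs ! ((i + 1) mod length vs)} \<in> E"
    using assms unfolding has_cycle_def by blast
  define m where "m = length vs"
  define G where "G = E - {{vs ! 0, vs ! 1}}"
  have idx: "vs ! i = vs ! j \<longleftrightarrow> i = j" if "i < m" "j < m" for i j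
    using nth_eq_iff_index_eq[OF dist] that by (simp add: m_def)
  have in_G: "{vs ! j, vs ! ((j + 1) mod m)} \<in> G" if "1 \<le> j" "j < m" for j
  proof -
    have "{vs ! j, vs ! ((j + 1) mod m)} \<noteq> {vs ! 0, vs ! 1}"
    proof
      assume "{vs ! j, vs ! ((j + 1) mod m)} = {vs ! 0, vs ! 1}"
      then have "vs ! j = vs ! 0 \<or> vs ! j = vs ! 1 \<and> vs ! ((j + 1) mod m) = vs ! 0"
        by (auto simp: doubleton_eq_iff)
      then have "j = 0 \<or> j = 1 \<and> (j + 1) mod m = 0"
        using idx[of j 0] idx[of j 1] idx[of "(j + 1) mod m" 0] that by simp
      then show False using that len by (auto simp: m_def dest: dvd_imp_le)
    qed
    then show ?thesis using cyc[of j] that by (simp add: G_def m_def)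
  qed
  have "reach G (vs ! 1) (vs ! (j mod m))" if "1 \<le> j" "j \<le> m" for j
    using that
  proof (induction j)
    case (Suc j)
    show ?case
    proof (cases "j = 0")
      case False
      then have "reach G (vs ! 1) (vs ! j)" using Suc by simp
      then show ?thesis using reach_trans reach_edge in_G[of j] Suc False by simp
    qed (use len in \<open>simp add: m_def\<close>)
  qed simp
  from this[of m] have "reach G (vs ! 0) (vs ! 1)"
    using len by (simp add: m_def reach_sym)
  moreover have "vs \<noteq> []" using len by auto
  then have "{vs ! 0, vs ! 1} \<in> E" "vs ! 0 \<noteq> vs ! 1"
    using cyc[of 0] len idx[of 0 1] by (auto simp: m_def)
  ultimately show ?thesis using that G_def by blast
qed

lemma not_has_cycle_iff_all_bridges: "\<not> has_cycle E \<longleftrightarrow> all_bridges E"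
proof
  show "all_bridges E" if "\<not> has_cycle E"
    using that has_cycle_if_non_bridge unfolding all_bridges_def by blast
  show "\<not> has_cycle E" if "all_bridges E"
  proof
    assume "has_cycle E"
    then obtain x y where "{x, y} \<in> E" "x \<noteq> y" "reach (E - {{x, y}}) x y"
      by (rule non_bridge_if_has_cycle)
    with \<open>all_bridges E\<close> show False by (auto simp: all_bridges_def)
  qed
qed

lemma all_bridges_mono: "all_bridges E \<Longrightarrow> E' \<subseteq> E \<Longrightarrow> all_bridges E'"
  unfolding all_bridges_def by (meson Diff_mono order_refl reach_mono subsetD)

lemma all_bridges_Un_disjoint:
  assumes "A \<subseteq> edges_on S" "B \<subseteq> edges_on T" "S \<inter> T = {}"
    and "all_bridges A" "all_bridges B"
  shows "all_bridges (A \<union> B)"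
  unfolding all_bridges_def
proof (intro allI impI notI)
  fix x y assume e: "{x, y} \<in> A \<union> B" and ne: "x \<noteq> y" and r: "reach (A \<union> B - {{x, y}}) x y"
  have one_side: False
    if "A' \<subseteq> edges_on S'" "B' \<subseteq> edges_on T'" "S' \<inter> T' = {}" "{x, y} \<in> A' \<union> B'"
      "all_bridges A'" "reach (A' - {{x, y}}) x y" for A' B' S' T'
  proof -
    have "x \<in> S'" using reach_in_vertices[of "A' - {{x, y}}" S'] that(1,6) ne by blast
    then have "{x, y} \<in> A'" using that(2-4) by (auto simp: edges_on_def)
    then show False using that(5,6) ne by (auto simp: all_bridges_def)
  qed
  have split: "A \<union> B - {{x, y}} = (A - {{x, y}}) \<union> (B - {{x, y}})" by blast
  have "A - {{x, y}} \<subseteq> edges_on S" "B - {{x, y}} \<subseteq> edges_on T" using assms(1,2) by blast+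
  from reach_Un_disjoint[OF this assms(3)] r
  have "reach (A - {{x, y}}) x y \<or> reach (B - {{x, y}}) x y" unfolding split by simp
  then show False
  proof
    show False if "reach (A - {{x, y}}) x y"
      by (rule one_side[OF assms(1,2,3) e assms(4) that])
    show False if "reach (B - {{x, y}}) x y"
      by (rule one_side[OF assms(2,1) _ _ assms(5) that]) (use e assms(3) in auto)
  qed
qed

subsection \<open>Rooted forests\<close>

definition rooted_forests :: "nat set \<Rightarrow> nat set \<Rightarrow> nat set set set" where
  "rooted_forests V R = {E. E \<subseteq> edges_on V \<and> all_bridges E \<and>
     (\<forall>u\<in>V. \<exists>r\<in>R. reach E u r) \<and> (\<forall>r\<in>R. \<forall>r'\<in>R. reach E r r' \<longrightarrow> r = r')}"

lemma finite_rooted_forests: "finite V \<Longrightarrow> finite (rooted_forests V R)"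
  unfolding rooted_forests_def
  by (rule finite_subset[of _ "Pow (edges_on V)"]) (auto simp: finite_edges_on)

definition star :: "nat \<Rightarrow> nat set \<Rightarrow> nat set set" where
  "star v S = (\<lambda>s. {v, s}) ` S"

lemma reach_Un_star:
  fixes S :: "nat set"
  assumes H: "\<forall>e\<in>H. v \<notin> e"
  defines "C \<equiv> insert v {x. \<exists>s\<in>S. reach H s x}"
  shows "reach (H \<union> star v S) u w \<longleftrightarrow> reach H u w \<or> (u \<in> C \<and> w \<in> C)"
proof
  have closed: "x \<in> C" if xy: "reach H x y" and yC: "y \<in> C" for x y
  proof (cases "y = v")
    case True
    then show ?thesis using xy reach_isolated[OF H] by (simp add: C_def)
  next
    case False
    then obtain s where "s \<in> S" "reach H s y" using yC by (auto simp: C_def)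
    then show ?thesis using reach_trans[OF _ reach_sym[OF xy]] by (auto simp: C_def)
  qed
  assume "reach (H \<union> star v S) u w"
  then show "reach H u w \<or> (u \<in> C \<and> w \<in> C)"
  proof (induction rule: reach_induct)
    case (step w w')
    show ?case
    proof (cases "{w, w'} \<in> H")
      case True
      have "reach H u w'" if "reach H u w" using reach_trans[OF that reach_edge[OF True]] .
      moreover have "w' \<in> C" if "w \<in> C" using closed[OF reach_sym[OF reach_edge[OF True]] that] .
      ultimately show ?thesis using step(3) by blast
    next
      case False
      then obtain s where "s \<in> S" "{w, w'} = {v, s}" using step(2) by (auto simp: star_def)
      moreover from \<open>s \<in> S\<close> have "v \<in> C" "s \<in> C" unfolding C_def using reach_refl by blast+
      ultimately have "w \<in> C" "w' \<in> C" by (auto simp: doubleton_eq_iff)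
      then show ?thesis using step(3) closed by blast
    qed
  qed simp
next
  have to_v: "reach (H \<union> star v S) x v" if xC: "x \<in> C" for x
  proof (cases "x = v")
    case False
    then obtain s where s: "s \<in> S" "reach H s x" using xC by (auto simp: C_def)
    have "reach (H \<union> star v S) x s" using reach_mono[OF _ reach_sym[OF s(2)]] by blast
    moreover have "{s, v} \<in> H \<union> star v S" using s(1) by (auto simp: star_def insert_commute)
    ultimately show ?thesis using reach_trans reach_edge by blast
  qed simp
  assume "reach H u w \<or> (u \<in> C \<and> w \<in> C)"
  then show "reach (H \<union> star v S) u w"
  proof
    show ?thesis if "reach H u w" using reach_mono[OF _ that] by blast
    show ?thesis if "u \<in> C \<and> w \<in> C" using that to_v reach_sym reach_trans by metis
  qed
qed

lemma all_bridges_Un_star: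
  assumes H: "all_bridges H" "\<forall>e\<in>H. v \<notin> e" and "v \<notin> S"
    and S_sep: "\<And>s s'. s \<in> S \<Longrightarrow> s' \<in> S \<Longrightarrow> reach H s s' \<Longrightarrow> s = s'"
  shows "all_bridges (H \<union> star v S)"
  unfolding all_bridges_def
proof (intro allI impI notI)
  fix x y assume e: "{x, y} \<in> H \<union> star v S" and "x \<noteq> y"
    and r: "reach (H \<union> star v S - {{x, y}}) x y"
  show False
  proof (cases "{x, y} \<in> H")
    case True
    define H' where "H' = H - {{x, y}}"
    have "x \<noteq> v" "y \<noteq> v" using H(2) True by auto
    then have "H \<union> star v S - {{x, y}} = H' \<union> star v S"
      by (auto simp: H'_def star_def doubleton_eq_iff)
    then have "reach H' x y \<or> (\<exists>s\<in>S. reach H' s x) \<and> (\<exists>s\<in>S. reach H' s y)"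
      using reach_Un_star[of H' v S x y] r H(2) \<open>x \<noteq> v\<close> \<open>y \<noteq> v\<close> by (auto simp: H'_def)
    moreover have "\<not> reach H' x y" using H(1) True \<open>x \<noteq> y\<close> by (simp add: all_bridges_def H'_def)
    ultimately obtain s s' where s: "s \<in> S" "s' \<in> S" "reach H' s x" "reach H' s' y" by blast
    have "H' \<subseteq> H" by (simp add: H'_def)
    then have "reach H s x" "reach H y s'" using s(3,4) reach_mono reach_sym by blast+
    then have "reach H s s'" using reach_edge[OF True] reach_trans by blast
    then have "s = s'" using S_sep s(1,2) by blast
    then show False using s(3,4) \<open>\<not> reach H' x y\<close> reach_sym reach_trans by blast
  next
    case False
    then obtain s where s: "s \<in> S" "{x, y} = {v, s}" using e by (auto simp: star_def)
    have "reach (H \<union> star v S - {{v, s}}) x y" using r s(2) by simp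
    then have "reach (H \<union> star v S - {{v, s}}) v s"
      using s(2) reach_sym by (auto simp: doubleton_eq_iff)
    moreover have "H \<union> star v S - {{v, s}} = H \<union> star v (S - {s})"
      using H(2) s by (auto simp: star_def doubleton_eq_iff)
    ultimately have "reach H v s \<or> (\<exists>s'\<in>S - {s}. reach H s' s)"
      using reach_Un_star[of H v "S - {s}" v s] H(2) \<open>v \<notin> S\<close> s(1) by auto
    moreover have "\<not> reach H v s" using reach_isolated[OF H(2)] reach_sym \<open>v \<notin> S\<close> s(1) by blast
    ultimately show False using S_sep s(1) by blast
  qed
qed

lemma edges_eq_Un_star:
  assumes "E \<subseteq> edges_on V"
  shows "E = {e\<in>E. v \<notin> e} \<union> star v {s. {v, s} \<in> E}"
proof -
  have "e \<in> star v {s. {v, s} \<in> E}" if e: "e \<in> E" "v \<in> e" for e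
  proof -
    obtain x y where "e = {x, y}" using e assms by (blast elim: edges_onE)
    then have "e = {v, if x = v then y else x}" using \<open>v \<in> e\<close> by auto
    then show ?thesis using \<open>e \<in> E\<close> unfolding star_def by (intro image_eqI) auto
  qed
  then show ?thesis by (auto simp: star_def)
qed

lemma all_bridges_neighbours_disconnected:
  assumes "all_bridges E" "{v, a} \<in> E" "{v, b} \<in> E" "v \<noteq> a" "a \<noteq> b"
  shows "\<not> reach {e\<in>E. v \<notin> e} b a"
proof
  assume r: "reach {e\<in>E. v \<notin> e} b a"
  define H where "H = {e\<in>E. v \<notin> e} \<union> {{v, b}}"
  have "{v, b} \<noteq> {v, a}" using \<open>a \<noteq> b\<close> by (simp add: doubleton_eq_iff)
  then have sub: "H \<subseteq> E - {{v, a}}" using assms(3) by (auto simp: H_def)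
  have "reach H v b" by (rule reach_edge) (simp add: H_def)
  moreover have "reach H b a" by (rule reach_mono[OF _ r]) (auto simp: H_def)
  ultimately have "reach (E - {{v, a}}) v a" using reach_trans reach_mono[OF sub] by blast
  with assms(1,2,4) show False unfolding all_bridges_def by blast
qed

lemma rooted_forests_delete_root:
  assumes E: "E \<in> rooted_forests V R" and v: "v \<in> R"
  defines "S \<equiv> {s. {v, s} \<in> E}" and "E' \<equiv> {e\<in>E. v \<notin> e}"
  shows "S \<subseteq> V - R" "E' \<in> rooted_forests (V - {v}) (R - {v} \<union> S)"
proof -
  have Ee: "E \<subseteq> edges_on V" and Eb: "all_bridges E"
    and Ex: "\<forall>u\<in>V. \<exists>r\<in>R. reach E u r" and Esep: "\<forall>r\<in>R. \<forall>r'\<in>R. reach E r r' \<longrightarrow> r = r'"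
    using E unfolding rooted_forests_def by auto
  have H: "\<forall>e\<in>E'. v \<notin> e" by (simp add: E'_def)
  have ES: "E = E' \<union> star v S" unfolding E'_def S_def by (rule edges_eq_Un_star[OF Ee])
  have to_v: "reach E s v" if "s \<in> S" for s
    using that reach_sym[OF reach_edge] by (auto simp: S_def)
  show SVR: "S \<subseteq> V - R"
  proof
    fix s assume "s \<in> S"
    then have "{v, s} \<in> edges_on V" using Ee by (auto simp: S_def)
    then have "s \<in> V" "s \<noteq> v" by (auto simp: edges_on_doubleton_iff)
    moreover have "s \<notin> R" using Esep v to_v[OF \<open>s \<in> S\<close>] \<open>s \<noteq> v\<close> by blast
    ultimately show "s \<in> V - R" by blast
  qed
  have "E' \<subseteq> edges_on (V - {v})" using Ee by (auto simp: E'_def edges_on_def)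
  moreover have "all_bridges E'" using all_bridges_mono[OF Eb] by (auto simp: E'_def)
  moreover have "\<exists>r\<in>R - {v} \<union> S. reach E' u r" if u: "u \<in> V - {v}" for u
  proof -
    obtain \<rho> where \<rho>: "\<rho> \<in> R" "reach E u \<rho>" using Ex u by blast
    then have "reach (E' \<union> star v S) u \<rho>" using ES by simp
    then have "reach E' u \<rho> \<or> u \<in> insert v {x. \<exists>s\<in>S. reach E' s x}"
      unfolding reach_Un_star[OF H] by blast
    then have "reach E' u \<rho> \<or> (\<exists>s\<in>S. reach E' s u)" using u by blast
    moreover have "\<rho> \<noteq> v" if "reach E' u \<rho>" using reach_isolated[OF H] that u by blast
    ultimately show ?thesis using \<rho>(1) reach_sym by blast
  qed
  moreover have "a = b" if ab: "a \<in> R - {v} \<union> S" "b \<in> R - {v} \<union> S" "reach E' a b" for a b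
  proof (cases "a \<in> S \<and> b \<in> S")
    case True
    then have "{v, a} \<in> E" "{v, b} \<in> E" "v \<noteq> a" using SVR v by (auto simp: S_def)
    then show ?thesis
      using all_bridges_neighbours_disconnected[OF Eb] reach_sym[OF ab(3)] unfolding E'_def by blast
  next
    case False
    define root where "root x = (if x \<in> S then v else x)" for x
    have root: "root x \<in> R" "reach E x (root x)" if "x \<in> R - {v} \<union> S" for x
      using that v to_v by (auto simp: root_def)
    have "reach E a b" using reach_mono[OF _ ab(3)] ES by blast
    then have "reach E (root a) (root b)"
      using reach_trans[OF reach_trans[OF reach_sym[OF root(2)[OF ab(1)]]] root(2)[OF ab(2)]]
      by blast
    then have "root a = root b" using Esep root(1) ab(1,2) by blast
    then show ?thesis using False ab(1,2) unfolding root_def by (auto split: if_splits)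
  qed
  ultimately show "E' \<in> rooted_forests (V - {v}) (R - {v} \<union> S)"
    unfolding rooted_forests_def by blast
qed

lemma rooted_forests_add_root:
  assumes v: "v \<in> R" and "R \<subseteq> V" and SVR: "S \<subseteq> V - R"
    and E': "E' \<in> rooted_forests (V - {v}) (R - {v} \<union> S)"
  shows "E' \<union> star v S \<in> rooted_forests V R"
proof -
  have E'e: "E' \<subseteq> edges_on (V - {v})" and E'b: "all_bridges E'"
    and E'x: "\<forall>u\<in>V - {v}. \<exists>r\<in>R - {v} \<union> S. reach E' u r"
    and E'sep: "\<forall>r\<in>R - {v} \<union> S. \<forall>r'\<in>R - {v} \<union> S. reach E' r r' \<longrightarrow> r = r'"
    using E' unfolding rooted_forests_def by auto
  define E where "E = E' \<union> star v S"
  have H: "\<forall>e\<in>E'. v \<notin> e" using E'e by (auto simp: edges_on_def)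
  have "v \<notin> S" using SVR v by blast
  have reach_E: "reach E a b \<longleftrightarrow> reach E' a b \<or>
      (a = v \<or> (\<exists>s\<in>S. reach E' s a)) \<and> (b = v \<or> (\<exists>s\<in>S. reach E' s b))" for a b
    unfolding E_def reach_Un_star[OF H] by simp
  have "star v S \<subseteq> edges_on V"
    using SVR v \<open>R \<subseteq> V\<close> by (auto simp: star_def edges_on_doubleton_iff)
  then have "E \<subseteq> edges_on V" using E'e edges_on_mono[of "V - {v}" V] by (auto simp: E_def)
  moreover have "all_bridges E"
    unfolding E_def using E'sep by (intro all_bridges_Un_star[OF E'b H \<open>v \<notin> S\<close>]) auto
  moreover have "\<exists>r\<in>R. reach E u r" if u: "u \<in> V" for u
  proof (cases "u = v")
    case False
    then obtain \<rho> where \<rho>: "\<rho> \<in> R - {v} \<union> S" "reach E' u \<rho>" using E'x u by blast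
    then have u_\<rho>: "reach E u \<rho>" using reach_E by blast
    have "reach E \<rho> v" if "\<rho> \<in> S"
      using that reach_sym[OF reach_edge[of v \<rho>]] by (auto simp: E_def star_def)
    then show ?thesis using \<rho>(1) u_\<rho> v reach_trans by blast
  qed (use v reach_refl in blast)
  moreover have "a = b" if ab: "a \<in> R" "b \<in> R" "reach E a b" for a b
  proof -
    have only_v: "x = v" if "x \<in> R" "s \<in> S" "reach E' s x" for x s
      using that E'sep SVR by blast
    from ab(3) have "reach E' a b \<or>
        (a = v \<or> (\<exists>s\<in>S. reach E' s a)) \<and> (b = v \<or> (\<exists>s\<in>S. reach E' s b))"
      by (simp only: reach_E)
    then show ?thesis
    proof
      assume r: "reach E' a b"
      show ?thesis
      proof (cases "a = v \<or> b = v")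
        case True
        then show ?thesis using reach_isolated[OF H] r reach_sym by metis
      next
        case False
        then show ?thesis using E'sep ab(1,2) r by blast
      qed
    next
      assume "(a = v \<or> (\<exists>s\<in>S. reach E' s a)) \<and> (b = v \<or> (\<exists>s\<in>S. reach E' s b))"
      then show ?thesis using only_v ab(1,2) by blast
    qed
  qed
  ultimately show ?thesis unfolding rooted_forests_def E_def by blast
qed

subsection \<open>The generalised Cayley formula\<close>

lemma card_rooted_forests_recursion:
  assumes "finite V" and v: "v \<in> R" and "R \<subseteq> V"
  shows "card (rooted_forests V R) =
    (\<Sum>S\<in>Pow (V - R). card (rooted_forests (V - {v}) (R - {v} \<union> S)))"
proof -
  define A where "A = (SIGMA S:Pow (V - R). rooted_forests (V - {v}) (R - {v} \<union> S))"
  have "bij_betw (\<lambda>(S, E'). E' \<union> star v S) A (rooted_forests V R)"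
  proof (rule bij_betw_byWitness[where f' = "\<lambda>E. ({s. {v, s} \<in> E}, {e\<in>E. v \<notin> e})"])
    have "v \<notin> e" if "(S, E') \<in> A" "e \<in> E'" for S E' e
      using that by (auto simp: A_def rooted_forests_def edges_on_def)
    moreover have "v \<notin> S" if "(S, E') \<in> A" for S E' using that v by (auto simp: A_def)
    ultimately show "\<forall>a\<in>A. ({s. {v, s} \<in> (case a of (S, E') \<Rightarrow> E' \<union> star v S)},
        {e \<in> case a of (S, E') \<Rightarrow> E' \<union> star v S. v \<notin> e}) = a"
      by (fastforce simp: star_def doubleton_eq_iff)
    show "\<forall>E\<in>rooted_forests V R. (case ({s. {v, s} \<in> E}, {e \<in> E. v \<notin> e}) of
        (S, E') \<Rightarrow> E' \<union> star v S) = E"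
      using edges_eq_Un_star by (auto simp: rooted_forests_def)
    show "(\<lambda>(S, E'). E' \<union> star v S) ` A \<subseteq> rooted_forests V R"
      using rooted_forests_add_root[OF v \<open>R \<subseteq> V\<close>] by (auto simp: A_def)
    show "(\<lambda>E. ({s. {v, s} \<in> E}, {e \<in> E. v \<notin> e})) ` rooted_forests V R \<subseteq> A"
      using rooted_forests_delete_root[OF _ v] by (auto simp: A_def)
  qed
  then have "card (rooted_forests V R) = card A" by (simp add: bij_betw_same_card)
  also have "\<dots> = (\<Sum>S\<in>Pow (V - R). card (rooted_forests (V - {v}) (R - {v} \<union> S)))"
    unfolding A_def using \<open>finite V\<close> by (intro card_SigmaI) (auto intro: finite_rooted_forests)
  finally show ?thesis .
qed

lemma sum_Pow_card:
  assumes "finite A"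
  shows "(\<Sum>S\<in>Pow A. (f (card S) :: nat)) = (\<Sum>i\<le>card A. (card A choose i) * f i)"
proof -
  have im: "card ` Pow A = {..card A}"
  proof
    show "card ` Pow A \<subseteq> {..card A}" using assms by (auto intro: card_mono)
    show "{..card A} \<subseteq> card ` Pow A"
    proof
      fix i assume "i \<in> {..card A}"
      then obtain B where "B \<subseteq> A" "card B = i" using obtain_subset_with_card_n by (metis atMost_iff)
      then show "i \<in> card ` Pow A" by auto
    qed
  qed
  have "(\<Sum>S\<in>Pow A. f (card S)) = (\<Sum>i\<in>card ` Pow A. \<Sum>S\<in>{S\<in>Pow A. card S = i}. f (card S))"
    using assms by (intro sum.image_gen) simp
  also have "\<dots> = (\<Sum>i\<le>card A. \<Sum>S\<in>{S\<in>Pow A. card S = i}. f i)"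
    unfolding im by (intro sum.cong) auto
  also have "\<dots> = (\<Sum>i\<le>card A. (card A choose i) * f i)"
  proof (intro sum.cong refl)
    fix i
    have "{S\<in>Pow A. card S = i} = {S. S \<subseteq> A \<and> card S = i}" by auto
    then show "(\<Sum>S\<in>{S\<in>Pow A. card S = i}. f i) = (card A choose i) * f i"
      using n_subsets[OF assms, of i] by simp
  qed
  finally show ?thesis .
qed

text \<open>The generalised Cayley formula \<open>r m^(m-r-1)\<close>; the case \<open>r = m\<close> is separate because of
  truncated subtraction in the exponent.\<close>

definition rooted_forest_count :: "nat \<Rightarrow> nat \<Rightarrow> nat" where
  "rooted_forest_count m r = (if r = m then 1 else r * m ^ (m - r - 1))"

lemma binomial_sum_weighted:
  "(\<Sum>i\<le>n. (n choose i) * i * x ^ (n - i)) = n * (x + 1 :: nat) ^ (n - 1)"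
proof (cases n)
  case (Suc p)
  have shift: "(Suc p choose Suc j) * Suc j = Suc p * (p choose j)" for j
    using Suc_times_binomial[of j p] by (simp only: mult.commute)
  have "(\<Sum>i\<le>Suc p. (Suc p choose i) * i * x ^ (Suc p - i))
      = (\<Sum>j\<le>p. (Suc p choose Suc j) * Suc j * x ^ (Suc p - Suc j))"
    by (subst sum.atMost_Suc_shift) simp
  also have "\<dots> = (\<Sum>j\<le>p. Suc p * ((p choose j) * x ^ (p - j)))"
    by (simp only: shift diff_Suc_Suc mult.assoc)
  also have "\<dots> = Suc p * (x + 1) ^ p"
    using binomial_ring[of 1 x p] by (simp add: sum_distrib_left add.commute)
  finally show ?thesis using Suc by simp
qed simp

lemma rooted_forest_count_sum:
  assumes "r \<ge> 1" "n \<ge> 1"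
  shows "(\<Sum>i\<le>n. (n choose i) * rooted_forest_count (r + n - 1) (r - 1 + i)) = r * (r + n) ^ (n - 1)"
proof -
  define x where "x = r + n - 1"
  have "x \<ge> 1" using assms by (simp add: x_def)
  have summand: "rooted_forest_count x (r - 1 + i) * x = (r - 1 + i) * x ^ (n - i)" if "i \<le> n" for i
  proof (cases "i = n")
    case False
    then have "x - (r - 1 + i) - 1 = n - i - 1" "n - i = Suc (n - i - 1)" using assms that
      by (auto simp: x_def)
    then show ?thesis using False assms by (simp add: rooted_forest_count_def x_def)
  qed (use assms in \<open>simp add: rooted_forest_count_def x_def\<close>)
  have "(\<Sum>i\<le>n. (n choose i) * rooted_forest_count x (r - 1 + i)) * x
      = (\<Sum>i\<le>n. (n choose i) * ((r - 1 + i) * x ^ (n - i)))"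
    unfolding sum_distrib_right mult.assoc by (intro sum.cong refl) (metis atMost_iff summand)
  also have "\<dots> = (r - 1) * (\<Sum>i\<le>n. (n choose i) * x ^ (n - i))
      + (\<Sum>i\<le>n. (n choose i) * i * x ^ (n - i))"
    by (simp add: sum_distrib_left sum.distrib[symmetric] algebra_simps)
  also have "\<dots> = (r - 1) * (x + 1) ^ n + n * (x + 1) ^ (n - 1)"
    using binomial_ring[of 1 x n] by (simp add: binomial_sum_weighted add.commute)
  also have "\<dots> = ((r - 1) * (r + n) + n) * (r + n) ^ (n - 1)"
  proof -
    have "(x + 1) ^ n = (r + n) * (r + n) ^ (n - 1)" using assms by (simp add: x_def power_eq_if)
    then show ?thesis using assms by (simp add: x_def algebra_simps)
  qed
  also have "(r - 1) * (r + n) + n = r * x"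
    using assms by (cases r) (simp_all add: x_def algebra_simps)
  finally have "(\<Sum>i\<le>n. (n choose i) * rooted_forest_count x (r - 1 + i)) * x
      = (r * (r + n) ^ (n - 1)) * x"
    by (simp add: algebra_simps)
  then show ?thesis using \<open>x \<ge> 1\<close> unfolding x_def by (metis mult_right_cancel not_one_le_zero)
qed

theorem card_rooted_forests:
  "finite V \<Longrightarrow> R \<subseteq> V \<Longrightarrow> card (rooted_forests V R) = rooted_forest_count (card V) (card R)"
proof (induction "card V" arbitrary: V R)
  case 0
  then have "V = {}" "R = {}" by auto
  moreover have "rooted_forests {} {} = {{}}"
    by (auto simp: rooted_forests_def edges_on_def all_bridges_def)
  ultimately show ?case by (simp add: rooted_forest_count_def)
next
  case (Suc m)
  show ?case
  proof (cases "R = {}")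
    case True
    moreover have "V \<noteq> {}" using Suc.hyps(2) by auto
    ultimately show ?thesis using Suc.hyps(2)[symmetric]
      by (simp add: rooted_forests_def rooted_forest_count_def)
  next
    case False
    then obtain v where v: "v \<in> R" by blast
    have "finite R" using Suc.prems finite_subset by blast
    define n where "n = card (V - R)"
    have card_V: "card V = card R + n" using Suc.prems \<open>finite R\<close>
      by (simp add: n_def card_Diff_subset card_mono)
    have "card R \<ge> 1" using v \<open>finite R\<close> by (simp add: Suc_le_eq card_gt_0_iff) blast
    have "card (rooted_forests V R) =
        (\<Sum>S\<in>Pow (V - R). card (rooted_forests (V - {v}) (R - {v} \<union> S)))"
      by (rule card_rooted_forests_recursion[OF Suc.prems(1) v Suc.prems(2)])
    also have "\<dots> = (\<Sum>S\<in>Pow (V - R). rooted_forest_count m (card R - 1 + card S))"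
    proof (intro sum.cong refl)
      fix S assume S: "S \<in> Pow (V - R)"
      then have "finite S" using Suc.prems(1) by (auto intro: finite_subset)
      moreover have "(R - {v}) \<inter> S = {}" "R - {v} \<union> S \<subseteq> V - {v}" using S Suc.prems(2) v by auto
      moreover have "card (V - {v}) = m" using Suc v by auto
      ultimately show "card (rooted_forests (V - {v}) (R - {v} \<union> S))
          = rooted_forest_count m (card R - 1 + card S)"
        using Suc.hyps(1)[of "V - {v}" "R - {v} \<union> S"] Suc.prems(1) \<open>finite R\<close> v
        by (simp add: card_Un_disjoint)
    qed
    also have "\<dots> = (\<Sum>i\<le>n. (n choose i) * rooted_forest_count m (card R - 1 + i))"
      unfolding n_def using Suc.prems(1) by (subst sum_Pow_card) auto
    also have "\<dots> = rooted_forest_count (card V) (card R)"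
    proof (cases "n = 0")
      case True
      then show ?thesis using card_V Suc.hyps(2) by (simp add: rooted_forest_count_def)
    next
      case False
      have "m = card R + n - 1" using card_V Suc.hyps(2) by simp
      then show ?thesis
        using rooted_forest_count_sum[OF \<open>card R \<ge> 1\<close>, of n] card_V False \<open>card R \<ge> 1\<close>
        by (simp add: rooted_forest_count_def)
    qed
    finally show ?thesis .
  qed
qed

subsection \<open>Prescribed component sizes\<close>

definition component_in :: "nat set \<Rightarrow> nat set set \<Rightarrow> nat \<Rightarrow> nat set" where
  "component_in V E u = {w\<in>V. reach E u w}"

lemma reach_preserves_vertices: "E \<subseteq> edges_on V \<Longrightarrow> reach E u w \<Longrightarrow> u \<in> V \<longleftrightarrow> w \<in> V"
  using reach_in_vertices by blast

lemma component_in_eq_if_reach: "reach E u w \<Longrightarrow> component_in V E u = component_in V E w"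
  unfolding component_in_def using reach_trans reach_sym by blast

lemma component_in_Un_disjoint:
  assumes "A \<subseteq> edges_on S" "B \<subseteq> edges_on T" "S \<inter> T = {}" "u \<in> T"
  shows "component_in (S \<union> T) (A \<union> B) u = component_in T B u"
proof -
  have "reach A u w \<longleftrightarrow> w = u" for w
    using reach_in_vertices[OF assms(1), of u w] assms(3,4) by (cases "u = w") auto
  then show ?thesis
    using reach_Un_disjoint[OF assms(1-3)] reach_preserves_vertices[OF assms(2)] assms(4)
    by (auto simp: component_in_def)
qed

lemma rooted_forests_Un_disjoint:
  assumes A: "A \<subseteq> edges_on S" and B: "B \<subseteq> edges_on T" and "S \<inter> T = {}"
  shows "A \<union> B \<in> rooted_forests (S \<union> T) R \<longleftrightarrow>
    A \<in> rooted_forests S (R \<inter> S) \<and> B \<in> rooted_forests T (R \<inter> T)"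
proof -
  note reach_AB = reach_Un_disjoint[OF A B \<open>S \<inter> T = {}\<close>]
  have A_in_S: "reach A u w \<longleftrightarrow> reach (A \<union> B) u w" if "u \<in> S" for u w
    using that reach_AB reach_in_vertices[OF B, of u w] \<open>S \<inter> T = {}\<close> by (cases "u = w") auto
  have B_in_T: "reach B u w \<longleftrightarrow> reach (A \<union> B) u w" if "u \<in> T" for u w
    using that reach_AB reach_in_vertices[OF A, of u w] \<open>S \<inter> T = {}\<close> by (cases "u = w") auto
  have "A \<union> B \<subseteq> edges_on (S \<union> T)" using A B edges_on_mono[of S] edges_on_mono[of T] by blast
  moreover have "all_bridges (A \<union> B) \<longleftrightarrow> all_bridges A \<and> all_bridges B"
    using all_bridges_Un_disjoint[OF A B \<open>S \<inter> T = {}\<close>] all_bridges_mono by blast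
  moreover have "(\<forall>u\<in>S \<union> T. \<exists>r\<in>R. reach (A \<union> B) u r) \<longleftrightarrow>
      (\<forall>u\<in>S. \<exists>r\<in>R \<inter> S. reach A u r) \<and> (\<forall>u\<in>T. \<exists>r\<in>R \<inter> T. reach B u r)"
  proof -
    have "(\<exists>r\<in>R. reach (A \<union> B) u r) \<longleftrightarrow> (\<exists>r\<in>R \<inter> S. reach A u r)" if "u \<in> S" for u
      unfolding A_in_S[OF that, symmetric] using reach_preserves_vertices[OF A, of u] that by blast
    moreover have "(\<exists>r\<in>R. reach (A \<union> B) u r) \<longleftrightarrow> (\<exists>r\<in>R \<inter> T. reach B u r)" if "u \<in> T" for u
      unfolding B_in_T[OF that, symmetric] using reach_preserves_vertices[OF B, of u] that by blast
    ultimately show ?thesis by blast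
  qed
  moreover have "(\<forall>r\<in>R. \<forall>r'\<in>R. reach (A \<union> B) r r' \<longrightarrow> r = r') \<longleftrightarrow>
      (\<forall>r\<in>R \<inter> S. \<forall>r'\<in>R \<inter> S. reach A r r' \<longrightarrow> r = r') \<and>
      (\<forall>r\<in>R \<inter> T. \<forall>r'\<in>R \<inter> T. reach B r r' \<longrightarrow> r = r')"
  proof -
    have "reach A r r' \<Longrightarrow> r \<noteq> r' \<Longrightarrow> r \<in> S \<and> r' \<in> S"
      and "reach B r r' \<Longrightarrow> r \<noteq> r' \<Longrightarrow> r \<in> T \<and> r' \<in> T" for r r'
      using reach_in_vertices[OF A] reach_in_vertices[OF B] by blast+
    then show ?thesis unfolding reach_AB by blast
  qed
  ultimately show ?thesis using A B unfolding rooted_forests_def by blast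
qed

lemma rooted_forests_split:
  assumes E: "E \<in> rooted_forests V R" and "\<rho> \<in> R" and "R \<subseteq> V"
  defines "S \<equiv> component_in V E \<rho>"
  shows "\<rho> \<in> S" "S \<subseteq> V" "S \<inter> R = {\<rho>}" "E = {e\<in>E. e \<subseteq> S} \<union> {e\<in>E. e \<subseteq> V - S}"
    "{e\<in>E. e \<subseteq> S} \<in> rooted_forests S {\<rho>}" "{e\<in>E. e \<subseteq> V - S} \<in> rooted_forests (V - S) (R - {\<rho>})"
proof -
  have Ee: "E \<subseteq> edges_on V" and Esep: "\<forall>r\<in>R. \<forall>r'\<in>R. reach E r r' \<longrightarrow> r = r'"
    using E by (auto simp: rooted_forests_def)
  show "\<rho> \<in> S" "S \<subseteq> V" using \<open>\<rho> \<in> R\<close> \<open>R \<subseteq> V\<close> by (auto simp: S_def component_in_def)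
  show SR: "S \<inter> R = {\<rho>}" using Esep \<open>\<rho> \<in> S\<close> \<open>\<rho> \<in> R\<close> by (auto simp: S_def component_in_def)
  have "e \<subseteq> S \<or> e \<subseteq> V - S" if eE: "e \<in> E" for e
  proof -
    obtain x y where e: "e = {x, y}" "x \<in> V" "y \<in> V" using eE Ee by (blast elim: edges_onE)
    then have "reach E \<rho> x \<longleftrightarrow> reach E \<rho> y"
      using reach_edge[of x y E] eE reach_trans reach_sym by blast
    then show ?thesis using e by (auto simp: S_def component_in_def)
  qed
  then show split: "E = {e\<in>E. e \<subseteq> S} \<union> {e\<in>E. e \<subseteq> V - S}" by blast
  have "{e\<in>E. e \<subseteq> S} \<subseteq> edges_on S" "{e\<in>E. e \<subseteq> V - S} \<subseteq> edges_on (V - S)"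
    using Ee by (auto simp: edges_on_def)
  note parts = rooted_forests_Un_disjoint[OF this Diff_disjoint, of R, folded split]
  have "S \<union> (V - S) = V" "R \<inter> S = {\<rho>}" "R \<inter> (V - S) = R - {\<rho>}"
    using \<open>S \<subseteq> V\<close> SR \<open>R \<subseteq> V\<close> by auto
  with parts E show "{e\<in>E. e \<subseteq> S} \<in> rooted_forests S {\<rho>}"
    "{e\<in>E. e \<subseteq> V - S} \<in> rooted_forests (V - S) (R - {\<rho>})" by simp_all
qed

lemma rooted_forests_join:
  assumes "\<rho> \<in> S" "S \<subseteq> V" "S \<inter> R = {\<rho>}" "R \<subseteq> V"
    and A: "A \<in> rooted_forests S {\<rho>}" and B: "B \<in> rooted_forests (V - S) (R - {\<rho>})"
  shows "A \<union> B \<in> rooted_forests V R" "component_in V (A \<union> B) \<rho> = S"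
    "{e\<in>A \<union> B. e \<subseteq> S} = A" "{e\<in>A \<union> B. e \<subseteq> V - S} = B"
proof -
  have Ae: "A \<subseteq> edges_on S" and Be: "B \<subseteq> edges_on (V - S)"
    using A B by (auto simp: rooted_forests_def)
  have "S \<union> (V - S) = V" "R \<inter> S = {\<rho>}" "R \<inter> (V - S) = R - {\<rho>}"
    using assms(1-4) by auto
  with rooted_forests_Un_disjoint[OF Ae Be Diff_disjoint, of R] A B
  show "A \<union> B \<in> rooted_forests V R" by simp
  have "component_in S A \<rho> = S"
    using A \<open>\<rho> \<in> S\<close> reach_sym by (auto simp: rooted_forests_def component_in_def)
  moreover have "(V - S) \<union> S = V" using \<open>S \<subseteq> V\<close> by blast
  ultimately show "component_in V (A \<union> B) \<rho> = S"
    using component_in_Un_disjoint[OF Be Ae _ \<open>\<rho> \<in> S\<close>] by (simp add: Un_commute Int_commute)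
  have "e \<noteq> {}" if "e \<in> A \<union> B" for e using that Ae Be by (auto simp: edges_on_def)
  moreover have "e \<subseteq> V - S" if "e \<in> B" for e using that Be by (auto simp: edges_on_def)
  moreover have "e \<subseteq> S" if "e \<in> A" for e using that Ae by (auto simp: edges_on_def)
  ultimately show "{e\<in>A \<union> B. e \<subseteq> S} = A" "{e\<in>A \<union> B. e \<subseteq> V - S} = B"
    by blast+
qed

definition root_blocks :: "nat set \<Rightarrow> nat set \<Rightarrow> nat \<Rightarrow> nat \<Rightarrow> nat set set" where
  "root_blocks V R \<rho> c = {S. \<rho> \<in> S \<and> S \<subseteq> V \<and> S \<inter> R = {\<rho>} \<and> card S = c}"

lemma card_root_blocks:
  assumes "finite V" "R \<subseteq> V" "\<rho> \<in> R" "c \<ge> 1"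
  shows "card (root_blocks V R \<rho> c) = card (V - R) choose (c - 1)"
proof -
  have "bij_betw (\<lambda>S. S - {\<rho>}) (root_blocks V R \<rho> c) {T. T \<subseteq> V - R \<and> card T = c - 1}"
  proof (rule bij_betw_byWitness[where f' = "insert \<rho>"])
    have "finite S" if "S \<subseteq> V" for S using that assms(1) finite_subset by blast
    then show "(\<lambda>S. S - {\<rho>}) ` root_blocks V R \<rho> c \<subseteq> {T. T \<subseteq> V - R \<and> card T = c - 1}"
      by (auto simp: root_blocks_def)
    have "insert \<rho> T \<in> root_blocks V R \<rho> c" if "T \<subseteq> V - R" "card T = c - 1" for T
    proof -
      have "finite T" "\<rho> \<notin> T" using that assms(1,3) finite_subset by auto
      then show ?thesis using that assms(2-4) by (auto simp: root_blocks_def)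
    qed
    then show "insert \<rho> ` {T. T \<subseteq> V - R \<and> card T = c - 1} \<subseteq> root_blocks V R \<rho> c" by blast
  qed (use assms(3) in \<open>auto simp: root_blocks_def\<close>)
  then show ?thesis using assms(1) by (simp add: bij_betw_same_card n_subsets)
qed

lemma finite_root_blocks: "finite V \<Longrightarrow> finite (root_blocks V R \<rho> c)"
  unfolding root_blocks_def by (rule finite_subset[of _ "Pow V"]) auto

lemma bij_betw_split_root_component:
  assumes "R \<subseteq> V" "\<rho> \<in> R" "I \<subseteq> R - {\<rho>}"
  shows "bij_betw (\<lambda>(S, A, B). A \<union> B)
    (SIGMA S:root_blocks V R \<rho> c. rooted_forests S {\<rho>} \<times>
       {B \<in> rooted_forests (V - S) (R - {\<rho>}). \<forall>i\<in>I. P i (component_in (V - S) B i)})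
    {E \<in> rooted_forests V R. card (component_in V E \<rho>) = c \<and> (\<forall>i\<in>I. P i (component_in V E i))}"
    (is "bij_betw ?join ?Y ?X")
proof -
  define split_at where "split_at E =
    (component_in V E \<rho>, {e\<in>E. e \<subseteq> component_in V E \<rho>}, {e\<in>E. e \<subseteq> V - component_in V E \<rho>})"
    for E
  have other_components: "component_in V (A \<union> B) i = component_in (V - S) B i"
    if "A \<in> rooted_forests S {\<rho>}" "B \<in> rooted_forests (V - S) (R - {\<rho>})" "S \<subseteq> V" "i \<in> I"
      "S \<inter> R = {\<rho>}" for S A B i
  proof -
    have "A \<subseteq> edges_on S" "B \<subseteq> edges_on (V - S)" using that(1,2) by (auto simp: rooted_forests_def)
    moreover have "S \<union> (V - S) = V" "i \<in> V - S" using that(3-5) assms by auto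
    ultimately show ?thesis using component_in_Un_disjoint[OF _ _ Diff_disjoint] by metis
  qed
  have join: "A \<union> B \<in> ?X \<and> split_at (A \<union> B) = (S, A, B)" if "(S, A, B) \<in> ?Y" for S A B
  proof -
    have S: "\<rho> \<in> S" "S \<subseteq> V" "S \<inter> R = {\<rho>}" "card S = c" using that by (auto simp: root_blocks_def)
    have A: "A \<in> rooted_forests S {\<rho>}" and B: "B \<in> rooted_forests (V - S) (R - {\<rho>})"
      and P: "\<forall>i\<in>I. P i (component_in (V - S) B i)" using that by auto
    note parts = rooted_forests_join[OF S(1-3) assms(1) A B]
    show ?thesis using parts S(4) P other_components[OF A B S(2) _ S(3)] by (simp add: split_at_def)
  qed
  have split: "split_at E \<in> ?Y \<and> ?join (split_at E) = E" if "E \<in> ?X" for E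
  proof -
    define S where "S = component_in V E \<rho>"
    have E: "E \<in> rooted_forests V R" "card S = c" "\<forall>i\<in>I. P i (component_in V E i)"
      using that by (auto simp: S_def)
    note parts = rooted_forests_split[OF E(1) assms(2,1), folded S_def]
    have "component_in V E i = component_in (V - S) {e\<in>E. e \<subseteq> V - S} i" if "i \<in> I" for i
      using other_components[OF parts(5,6,2) that parts(3)] parts(4) by simp
    then show ?thesis using parts E(2,3)
      by (simp add: split_at_def S_def[symmetric] root_blocks_def)
  qed
  show ?thesis
    by (rule bij_betw_byWitness[where f' = split_at]) (use join split in fastforce)+
qed

text \<open>The component of root \<open>N\<close> consists of \<open>N\<close>, \<open>k N - 1\<close> of the \<open>m - r\<close> non-roots and a spanning
  tree on them; the remaining \<open>m - k N\<close> vertices carry a forest with the other \<open>r - 1\<close> roots.\<close>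

fun sized_forest_count :: "(nat \<Rightarrow> nat) \<Rightarrow> nat \<Rightarrow> nat \<Rightarrow> nat \<Rightarrow> nat" where
  "sized_forest_count k m r 0 = rooted_forest_count m r"
| "sized_forest_count k m r (Suc N) = ((m - r) choose (k (Suc N) - 1)) *
     rooted_forest_count (k (Suc N)) 1 * sized_forest_count k (m - k (Suc N)) (r - 1) N"

theorem card_sized_rooted_forests:
  assumes "finite V" "R \<subseteq> V" "{1..N} \<subseteq> R" "\<forall>i\<in>{1..N}. 1 \<le> k i"
  shows "card {E \<in> rooted_forests V R. \<forall>i\<in>{1..N}. card (component_in V E i) = k i}
    = sized_forest_count k (card V) (card R) N"
  using assms
proof (induction N arbitrary: V R)
  case 0
  then show ?case by (simp add: card_rooted_forests)
next
  case (Suc N)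
  define \<rho> where "\<rho> = Suc N"
  have "\<rho> \<in> R" "{1..N} \<subseteq> R - {\<rho>}" "k \<rho> \<ge> 1" using Suc.prems(3,4) by (auto simp: \<rho>_def)
  define G where "G S = {B \<in> rooted_forests (V - S) (R - {\<rho>}).
    \<forall>i\<in>{1..N}. card (component_in (V - S) B i) = k i}"
    for S
  have "{E \<in> rooted_forests V R. \<forall>i\<in>{1..Suc N}. card (component_in V E i) = k i}
      = {E \<in> rooted_forests V R. card (component_in V E \<rho>) = k \<rho> \<and>
          (\<forall>i\<in>{1..N}. card (component_in V E i) = k i)}"
    by (auto simp: \<rho>_def atLeastAtMostSuc_conv)
  also have "card \<dots> = card (SIGMA S:root_blocks V R \<rho> (k \<rho>). rooted_forests S {\<rho>} \<times> G S)"
    unfolding G_def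
    by (rule bij_betw_same_card[symmetric], rule bij_betw_split_root_component) fact+
  also have "\<dots> = (\<Sum>S\<in>root_blocks V R \<rho> (k \<rho>). card (rooted_forests S {\<rho>} \<times> G S))"
  proof (rule card_SigmaI)
    show "finite (root_blocks V R \<rho> (k \<rho>))" using Suc.prems(1) by (rule finite_root_blocks)
    have "finite S" if "S \<in> root_blocks V R \<rho> (k \<rho>)" for S
      using that Suc.prems(1) finite_subset by (auto simp: root_blocks_def)
    then show "\<forall>S\<in>root_blocks V R \<rho> (k \<rho>). finite (rooted_forests S {\<rho>} \<times> G S)"
      using Suc.prems(1) by (simp add: G_def finite_rooted_forests)
  qed
  also have "\<dots> = (\<Sum>S\<in>root_blocks V R \<rho> (k \<rho>).
      rooted_forest_count (k \<rho>) 1 * sized_forest_count k (card V - k \<rho>) (card R - 1) N)"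
  proof (rule sum.cong[OF refl])
    fix S assume "S \<in> root_blocks V R \<rho> (k \<rho>)"
    then have S: "\<rho> \<in> S" "S \<subseteq> V" "S \<inter> R = {\<rho>}" "card S = k \<rho>" "finite S"
      using Suc.prems(1) finite_subset by (auto simp: root_blocks_def)
    have "card (G S) = sized_forest_count k (card (V - S)) (card (R - {\<rho>})) N"
      unfolding G_def using Suc.IH[of "V - S" "R - {\<rho>}"] Suc.prems S(3) \<open>{1..N} \<subseteq> R - {\<rho>}\<close> by auto
    moreover have "card (V - S) = card V - k \<rho>" "card (R - {\<rho>}) = card R - 1"
      using S \<open>\<rho> \<in> R\<close> by (simp_all add: card_Diff_subset)
    ultimately show "card (rooted_forests S {\<rho>} \<times> G S)
        = rooted_forest_count (k \<rho>) 1 * sized_forest_count k (card V - k \<rho>) (card R - 1) N"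
      using card_rooted_forests[of S "{\<rho>}"] S by (simp add: card_cartesian_product)
  qed
  also have "\<dots> = sized_forest_count k (card V) (card R) (Suc N)"
    using card_root_blocks[OF Suc.prems(1,2) \<open>\<rho> \<in> R\<close> \<open>k \<rho> \<ge> 1\<close>] Suc.prems(1,2)
    by (simp add: \<rho>_def card_Diff_subset finite_subset)
  finally show ?case .
qed

subsection \<open>The forest class\<close>

lemma component_eq_component_in: "component n E v = component_in {1..n} E v"
  by (simp add: component_def component_in_def)

lemma card_components_eq_iff:
  assumes "finite V" "T \<subseteq> V" and sep: "\<forall>i\<in>T. \<forall>j\<in>T. reach E i j \<longrightarrow> i = j"
  shows "card (component_in V E ` V) = card T \<longleftrightarrow> (\<forall>u\<in>V. \<exists>r\<in>T. reach E u r)"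
proof -
  have self: "u \<in> component_in V E u" if "u \<in> V" for u using that by (simp add: component_in_def)
  have "inj_on (component_in V E) T"
  proof (rule inj_onI)
    fix i j assume "i \<in> T" "j \<in> T" "component_in V E i = component_in V E j"
    then have "reach E i j" using self[of j] assms(2) by (auto simp: component_in_def)
    then show "i = j" using sep \<open>i \<in> T\<close> \<open>j \<in> T\<close> by blast
  qed
  then have card_T: "card (component_in V E ` T) = card T" by (rule card_image)
  have sub: "component_in V E ` T \<subseteq> component_in V E ` V" using assms(2) by blast
  show ?thesis
  proof
    assume "card (component_in V E ` V) = card T"
    then have eq: "component_in V E ` T = component_in V E ` V"
      using card_subset_eq[OF _ sub] card_T assms(1) by simp
    show "\<forall>u\<in>V. \<exists>r\<in>T. reach E u r"
    proof
      fix u assume "u \<in> V"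
      then obtain r where "r \<in> T" "component_in V E u = component_in V E r" using eq by blast
      then show "\<exists>r\<in>T. reach E u r" using self[of r] assms(2) by (auto simp: component_in_def)
    qed
  next
    assume "\<forall>u\<in>V. \<exists>r\<in>T. reach E u r"
    then have "component_in V E ` V \<subseteq> component_in V E ` T"
      using component_in_eq_if_reach by blast
    then show "card (component_in V E ` V) = card T" using sub card_T by (simp add: subset_antisym)
  qed
qed

lemma forest_class_eq_rooted_forests:
  assumes "t \<le> n"
  shows "forest_class n t = rooted_forests {1..n} {1..t}"
proof (intro set_eqI)
  fix E
  have "(\<forall>i\<in>{1..t}. \<forall>j\<in>{1..t}. i \<noteq> j \<longrightarrow> \<not> reach E i j) \<longleftrightarrow>
      (\<forall>i\<in>{1..t}. \<forall>j\<in>{1..t}. reach E i j \<longrightarrow> i = j)" by blast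
  then show "E \<in> forest_class n t \<longleftrightarrow> E \<in> rooted_forests {1..n} {1..t}"
    using card_components_eq_iff[of "{1..n}" "{1..t}" E] assms
    unfolding forest_class_def rooted_forests_def is_forest_def num_components_def
      graph_edges_eq_edges_on not_has_cycle_iff_all_bridges component_eq_component_in
    by auto
qed

lemma comp_size_prob_eq:
  assumes "N \<le> t" "t \<le> n" "\<forall>i\<in>{1..N}. 1 \<le> k i"
  shows "comp_size_prob n t N k = real (sized_forest_count k n t N) / real (rooted_forest_count n t)"
  using card_sized_rooted_forests[of "{1..n}" "{1..t}" N k] card_rooted_forests[of "{1..n}" "{1..t}"]
    assms
  unfolding comp_size_prob_def forest_class_eq_rooted_forests[OF assms(2)] component_eq_component_in
  by simp

subsection \<open>Asymptotics\<close>

locale sparse_roots =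
  fixes m r :: "nat \<Rightarrow> nat"
  assumes m_at_top: "filterlim m at_top sequentially"
    and r_at_top: "filterlim r at_top sequentially"
    and r_over_m: "((\<lambda>x. real (r x) / real (m x)) \<longlongrightarrow> 0) sequentially"
begin

lemma eventually_m_ge: "eventually (\<lambda>x. c \<le> m x) sequentially"
  using m_at_top unfolding filterlim_at_top by blast

lemma eventually_r_ge: "eventually (\<lambda>x. c \<le> r x) sequentially"
  using r_at_top unfolding filterlim_at_top by blast

lemma const_over_m: "((\<lambda>x. c / real (m x)) \<longlongrightarrow> 0) sequentially"
  using filterlim_compose[OF filterlim_real_sequentially m_at_top]
  by (intro tendsto_divide_0[OF tendsto_const] filterlim_at_top_imp_at_infinity) (simp add: o_def)

lemma eventually_gap: "eventually (\<lambda>x. r x + c \<le> m x) sequentially"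
proof -
  have "eventually (\<lambda>x. real (r x) / real (m x) < 1 / 2) sequentially"
    using order_tendstoD(2)[OF r_over_m, of "1 / 2"] by simp
  with eventually_m_ge[of "2 * c + 1"] show ?thesis
  proof eventually_elim
    case (elim x)
    then have "2 * real (r x) < real (m x)" by (simp add: field_simps)
    with elim(1) show ?case by linarith
  qed
qed

lemma shift: "sparse_roots (\<lambda>x. m x - K) (\<lambda>x. r x - 1)"
proof
  show "filterlim (\<lambda>x. m x - K) at_top sequentially"
    unfolding filterlim_at_top
  proof
    show "eventually (\<lambda>x. Z \<le> m x - K) sequentially" for Z
      using eventually_m_ge[of "Z + K"] by eventually_elim simp
  qed
  show "filterlim (\<lambda>x. r x - 1) at_top sequentially"
    unfolding filterlim_at_top
  proof
    show "eventually (\<lambda>x. Z \<le> r x - 1) sequentially" for Z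
      using eventually_r_ge[of "Z + 1"] by eventually_elim simp
  qed
  show "((\<lambda>x. real (r x - 1) / real (m x - K)) \<longlongrightarrow> 0) sequentially"
  proof (rule tendsto_sandwich)
    show "eventually (\<lambda>x. 0 \<le> real (r x - 1) / real (m x - K)) sequentially" by simp
    show "eventually (\<lambda>x. real (r x - 1) / real (m x - K) \<le> 2 * (real (r x) / real (m x)))
        sequentially"
      using eventually_m_ge[of "2 * K + 1"]
    proof eventually_elim
      case (elim x)
      then have "real (m x) / 2 \<le> real (m x - K)" "0 < real (m x - K)"
        by (simp_all add: of_nat_diff)
      then have "real (r x - 1) / real (m x - K) \<le> real (r x) / (real (m x) / 2)"
        by (intro frac_le) auto
      then show ?case by (simp add: mult.commute)
    qed
    show "((\<lambda>x. 2 * (real (r x) / real (m x))) \<longlongrightarrow> 0) sequentially"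
      using tendsto_mult_right_zero[OF r_over_m] by simp
  qed simp
qed

lemma binomial_over_power_tendsto:
  "((\<lambda>x. real ((m x - r x) choose j) / real (m x) ^ j) \<longlongrightarrow> 1 / fact j) sequentially"
proof -
  have factor: "((\<lambda>x. real (m x - r x - i) / real (m x)) \<longlongrightarrow> 1) sequentially" for i
  proof -
    have "((\<lambda>x. 1 - real (r x) / real (m x) - real i / real (m x)) \<longlongrightarrow> 1 - 0 - 0) sequentially"
      by (intro tendsto_intros r_over_m const_over_m)
    moreover have "eventually (\<lambda>x. 1 - real (r x) / real (m x) - real i / real (m x)
        = real (m x - r x - i) / real (m x)) sequentially"
      using eventually_gap[of "i + 1"] by eventually_elim (simp add: of_nat_diff field_simps)
    ultimately show ?thesis by (simp add: tendsto_cong)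
  qed
  have "((\<lambda>x. (\<Prod>i<j. real (m x - r x - i) / real (m x)) / fact j)
      \<longlongrightarrow> (\<Prod>i<j. 1) / fact j) sequentially"
    by (intro tendsto_intros factor) simp
  moreover have "eventually (\<lambda>x. (\<Prod>i<j. real (m x - r x - i) / real (m x)) / fact j
      = real ((m x - r x) choose j) / real (m x) ^ j) sequentially"
    using eventually_gap[of j]
  proof eventually_elim
    case (elim x)
    have "real ((m x - r x) choose j) * fact j = (\<Prod>i<j. real (m x - r x) - real i)"
      by (simp add: binomial_gbinomial gbinomial_mult_fact' atLeast0LessThan)
    also have "\<dots> = (\<Prod>i<j. real (m x - r x - i))"
      using elim by (intro prod.cong) (auto simp: of_nat_diff)
    finally have "(\<Prod>i<j. real (m x - r x - i)) = real ((m x - r x) choose j) * fact j" ..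
    then show ?case unfolding prod_dividef by simp
  qed
  ultimately show ?thesis by (simp add: tendsto_cong)
qed

text \<open>\<open>(1 - K/m)^m \<rightarrow> e^(-K)\<close>, and Bernoulli's inequality squeezes the surplus factor
  \<open>(1 - K/m)^(K+r)\<close> to \<open>1\<close> because \<open>K r / m \<rightarrow> 0\<close>.\<close>

lemma power_ratio_tendsto_exp:
  "((\<lambda>x. ((real (m x) - real K) / real (m x)) ^ (m x - K - r x)) \<longlongrightarrow> exp (- real K)) sequentially"
proof -
  define q where "q x = 1 + (- real K) / real (m x)" for x
  have full: "((\<lambda>x. q x ^ m x) \<longlongrightarrow> exp (- real K)) sequentially"
    using filterlim_compose[OF tendsto_exp_limit_sequentially[of "- real K"] m_at_top]
    by (simp add: q_def o_def)
  have bounds: "eventually (\<lambda>x. 0 \<le> q x \<and> q x \<le> 1) sequentially"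
    using eventually_m_ge[of "K + 1"] by eventually_elim (simp add: q_def field_simps)
  have part: "((\<lambda>x. q x ^ (K + r x)) \<longlongrightarrow> 1) sequentially"
  proof (rule tendsto_sandwich)
    show "eventually (\<lambda>x. 1 - real K * (real K / real (m x)) - real K * (real (r x) / real (m x))
        \<le> q x ^ (K + r x)) sequentially"
      using bounds
    proof eventually_elim
      case (elim x)
      then have "1 + real (K + r x) * (- real K / real (m x)) \<le> q x ^ (K + r x)"
        unfolding q_def by (intro Bernoulli_inequality) simp
      then show ?case by (simp add: field_simps add_divide_distrib)
    qed
    show "eventually (\<lambda>x. q x ^ (K + r x) \<le> 1) sequentially"
      using bounds by eventually_elim (simp add: power_le_one)
    show "((\<lambda>x. 1 - real K * (real K / real (m x)) - real K * (real (r x) / real (m x)))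
        \<longlongrightarrow> 1) sequentially"
      using tendsto_diff[OF tendsto_diff[OF tendsto_const tendsto_mult_right_zero[OF const_over_m]]
          tendsto_mult_right_zero[OF r_over_m]] by simp
  qed simp
  have "((\<lambda>x. q x ^ m x / q x ^ (K + r x)) \<longlongrightarrow> exp (- real K) / 1) sequentially"
    by (rule tendsto_divide[OF full part]) simp
  moreover have "eventually (\<lambda>x. q x ^ m x / q x ^ (K + r x)
      = ((real (m x) - real K) / real (m x)) ^ (m x - K - r x)) sequentially"
    using eventually_gap[of "K + 1"]
  proof eventually_elim
    case (elim x)
    then have "q x \<noteq> 0" "q x = (real (m x) - real K) / real (m x)"
      by (simp_all add: q_def field_simps)
    moreover have "m x = (m x - K - r x) + (K + r x)" using elim by simp
    ultimately show ?case by (metis power_add nonzero_mult_div_cancel_right power_not_zero)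
  qed
  ultimately show ?thesis by (simp add: tendsto_cong)
qed

end

lemma rooted_forest_count_single_root:
  assumes "K \<ge> 1"
  shows "real K * real (rooted_forest_count K 1) = real K ^ (K - 1)"
proof (cases "K = 1")
  case False
  then have "K - 1 = Suc (K - 2)" using assms by simp
  then show ?thesis using False by (simp add: rooted_forest_count_def)
qed (simp add: rooted_forest_count_def)

context sparse_roots
begin

lemma first_root_ratio_tendsto:
  assumes "K \<ge> 1"
  shows "((\<lambda>x. real ((m x - r x) choose (K - 1)) * real (rooted_forest_count K 1) *
      real (rooted_forest_count (m x - K) (r x - 1)) / real (rooted_forest_count (m x) (r x)))
    \<longlongrightarrow> exp (- real K) * real K ^ (K - 1) / fact K) sequentially"
proof -
  have "((\<lambda>x. 1 - 1 / real (r x)) \<longlongrightarrow> 1 - 0) sequentially"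
    using filterlim_compose[OF filterlim_real_sequentially r_at_top]
    by (intro tendsto_intros tendsto_divide_0[OF tendsto_const] filterlim_at_top_imp_at_infinity)
      (simp add: o_def)
  then have "((\<lambda>x. real ((m x - r x) choose (K - 1)) / real (m x) ^ (K - 1)
      * real (rooted_forest_count K 1)
      * (1 - 1 / real (r x)) * ((real (m x) - real K) / real (m x)) ^ (m x - K - r x))
    \<longlongrightarrow> 1 / fact (K - 1) * real (rooted_forest_count K 1) * (1 - 0) * exp (- real K)) sequentially"
    by (intro tendsto_mult tendsto_const binomial_over_power_tendsto power_ratio_tendsto_exp)
  moreover have "1 / fact (K - 1) * real (rooted_forest_count K 1) * (1 - 0) * exp (- real K)
      = exp (- real K) * (real K * real (rooted_forest_count K 1)) / (real K * fact (K - 1))"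
    using assms by (simp add: field_simps)
  also have "\<dots> = exp (- real K) * real K ^ (K - 1) / fact K"
    using fact_reduce[of K, where 'a = real] rooted_forest_count_single_root[OF assms] assms by simp
  moreover have "eventually (\<lambda>x.
      real ((m x - r x) choose (K - 1)) / real (m x) ^ (K - 1) * real (rooted_forest_count K 1)
        * (1 - 1 / real (r x)) * ((real (m x) - real K) / real (m x)) ^ (m x - K - r x)
      = real ((m x - r x) choose (K - 1)) * real (rooted_forest_count K 1) *
        real (rooted_forest_count (m x - K) (r x - 1)) / real (rooted_forest_count (m x) (r x)))
    sequentially"
    using eventually_gap[of "K + 1"] eventually_r_ge[of 2]
  proof eventually_elim
    case (elim x)
    define M R where "M = m x" and "R = r x"
    have "R \<ge> 2" "R + (K + 1) \<le> M" using elim by (auto simp: M_def R_def)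
    then have "R - 1 \<noteq> M - K" "M - K - (R - 1) - 1 = M - K - R" "R \<noteq> M"
      "M - R - 1 = (M - K - R) + (K - 1)" using \<open>K \<ge> 1\<close> by auto
    then have "rooted_forest_count (M - K) (R - 1) = (R - 1) * (M - K) ^ (M - K - R)"
      and "rooted_forest_count M R = R * (M ^ (M - K - R) * M ^ (K - 1))"
      by (simp_all only: rooted_forest_count_def if_False power_add)
    then have "real (rooted_forest_count (M - K) (R - 1))
        = (real R - 1) * (real M - real K) ^ (M - K - R)"
      and "real (rooted_forest_count M R) = real R * (real M ^ (M - K - R) * real M ^ (K - 1))"
      using \<open>R \<ge> 2\<close> \<open>R + (K + 1) \<le> M\<close> by (simp_all add: of_nat_diff)
    moreover have "real M > 0" "real R > 0" using \<open>R \<ge> 2\<close> \<open>R + (K + 1) \<le> M\<close> by auto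
    ultimately show ?case
      unfolding M_def[symmetric] R_def[symmetric]
      by (simp add: power_divide) (simp add: field_simps)
  qed
  ultimately show ?thesis by (simp add: tendsto_cong)
qed

end

lemma sized_forest_ratio_tendsto:
  assumes "sparse_roots m r" "\<forall>i\<in>{1..N}. 1 \<le> k i"
  shows "((\<lambda>x. real (sized_forest_count k (m x) (r x) N) / real (rooted_forest_count (m x) (r x)))
    \<longlongrightarrow> (\<Prod>i\<in>{1..N}. exp (- real (k i)) * real (k i) ^ (k i - 1) / fact (k i))) sequentially"
  using assms
proof (induction N arbitrary: m r)
  case 0
  interpret sparse_roots m r by (rule 0(1))
  have "eventually (\<lambda>x.
      real (sized_forest_count k (m x) (r x) 0) / real (rooted_forest_count (m x) (r x)) = 1)
      sequentially"
    using eventually_gap[of 1] eventually_r_ge[of 1]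
    by eventually_elim (simp add: rooted_forest_count_def)
  then show ?case by (simp add: tendsto_cong)
next
  case (Suc N)
  interpret sparse_roots m r by (rule Suc.prems(1))
  define K where "K = k (Suc N)"
  have "K \<ge> 1" using Suc.prems(2) by (simp add: K_def)
  have lim: "((\<lambda>x. real ((m x - r x) choose (K - 1)) * real (rooted_forest_count K 1) *
      real (rooted_forest_count (m x - K) (r x - 1)) / real (rooted_forest_count (m x) (r x)) *
      (real (sized_forest_count k (m x - K) (r x - 1) N)
        / real (rooted_forest_count (m x - K) (r x - 1))))
    \<longlongrightarrow> exp (- real K) * real K ^ (K - 1) / fact K *
      (\<Prod>i\<in>{1..N}. exp (- real (k i)) * real (k i) ^ (k i - 1) / fact (k i))) sequentially"
    using first_root_ratio_tendsto[OF \<open>K \<ge> 1\<close>] Suc.IH[OF shift] Suc.prems(2)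
    by (intro tendsto_mult) auto
  have "eventually (\<lambda>x.
      real ((m x - r x) choose (K - 1)) * real (rooted_forest_count K 1) *
      real (rooted_forest_count (m x - K) (r x - 1)) / real (rooted_forest_count (m x) (r x)) *
      (real (sized_forest_count k (m x - K) (r x - 1) N)
        / real (rooted_forest_count (m x - K) (r x - 1)))
    = real (sized_forest_count k (m x) (r x) (Suc N)) / real (rooted_forest_count (m x) (r x)))
    sequentially"
    using eventually_gap[of "K + 1"] eventually_r_ge[of 2]
  proof eventually_elim
    case (elim x)
    then have "real (rooted_forest_count (m x - K) (r x - 1)) \<noteq> 0"
      by (simp add: rooted_forest_count_def)
    then show ?case by (simp add: K_def)
  qed
  from Lim_transform_eventually[OF lim this] show ?case
    by (simp add: prod.cl_ivl_Suc K_def mult.commute)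
qed

theorem mainTheorem17:
  fixes t :: "nat \<Rightarrow> nat" and N :: nat and k :: "nat \<Rightarrow> nat"
  assumes "(\<lambda>n. real (t n)) \<in> o(\<lambda>n. real n)"
    and "filterlim t at_top sequentially"
    and "\<forall>i\<in>{1..N}. 1 \<le> k i"
  shows "(\<lambda>n. comp_size_prob n (t n) N k) \<sim>[sequentially]
         (\<lambda>n. \<Prod>i\<in>{1..N}. exp (- real (k i)) * real (k i) ^ (k i - 1) / fact (k i))"
proof -
  have "sparse_roots (\<lambda>n. n) t"
  proof
    show "filterlim (\<lambda>n. n) at_top sequentially" by (simp add: filterlim_ident)
    show "((\<lambda>n. real (t n) / real n) \<longlongrightarrow> 0) sequentially" using smalloD_tendsto[OF assms(1)] .
  qed (rule assms(2))
  then interpret sparse_roots "\<lambda>n. n" t .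
  have "((\<lambda>n. real (sized_forest_count k n (t n) N) / real (rooted_forest_count n (t n)))
      \<longlongrightarrow> (\<Prod>i\<in>{1..N}. exp (- real (k i)) * real (k i) ^ (k i - 1) / fact (k i))) sequentially"
    using sized_forest_ratio_tendsto[OF sparse_roots_axioms assms(3)] .
  moreover have "eventually (\<lambda>n.
      real (sized_forest_count k n (t n) N) / real (rooted_forest_count n (t n))
      = comp_size_prob n (t n) N k) sequentially"
    using eventually_gap[of 0] eventually_r_ge[of N]
    by eventually_elim (simp add: comp_size_prob_eq[OF _ _ assms(3)])
  ultimately have "((\<lambda>n. comp_size_prob n (t n) N k)
      \<longlongrightarrow> (\<Prod>i\<in>{1..N}. exp (- real (k i)) * real (k i) ^ (k i - 1) / fact (k i))) sequentially"
    by (rule Lim_transform_eventually)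
  then show ?thesis
    by (rule tendsto_imp_asymp_equiv_const) (use assms(3) in \<open>auto simp: prod_zero_iff\<close>)
qed

end
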